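(* Let $c,d\in\mathbb{R}$ with $d\neq0$ be given. Then $\mathcal{S}[\mu,\lambda]=\mathcal{S}^*[\mu,\lambda]$ for all $\mu,\lambda>0$.
   Context: Impulse time sequences are strictly increasing sequences $\{t_k\}$ in $(t_0,\infty)$, finite or infinite and unbounded, with no finite accumulation point. For $t\ge s\ge t_0$, $N(t,s)$ denotes the number of impulse times in the half-open interval $(s,t]$ and $N^*(t,s)$ the number of impulse times in the closed interval $[s,t]$. $\mathcal{S}[\mu,\lambda]$ is the class of impulse time sequences satisfying $-dN(t,s)-(c-\lambda)(t-s)\le\mu$ for all $t\ge s\ge t_0$, and $\mathcal{S}^*[\mu,\lambda]$ is the class of impulse time sequences satisfying $-dN^*(t,s)-(c-\lambda)(t-s)\le\mu$ for all $t\ge s\ge t_0$. *)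

theory Defs
  imports "HOL-Analysis.Analysis" "HOL-Library.Extended_Nat"
begin

text \<open>An impulse time sequence in (t0, infinity) is given by its length
  n (finite, or \<infinity> for an infinite sequence) and the terms t k for
  enat k < n.  It is strictly increasing, lies in (t0, infinity), and if it is
  infinite it is unbounded (equivalently, for a strictly increasing sequence,
  it has no finite accumulation point).\<close>
definition impulse_seq :: "real \<Rightarrow> enat \<Rightarrow> (nat \<Rightarrow> real) \<Rightarrow> bool" where
  "impulse_seq t0 n t \<longleftrightarrow>
     (\<forall>i j. i < j \<and> enat j < n \<longrightarrow> t i < t j) \<and>
     (\<forall>k. enat k < n \<longrightarrow> t0 < t k) \<and>
     (n = \<infinity> \<longrightarrow> filterlim t at_top sequentially)"

definition N_count :: "enat \<Rightarrow> (nat \<Rightarrow> real) \<Rightarrow> real \<Rightarrow> real \<Rightarrow> nat" where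
  "N_count n t b a = card {k. enat k < n \<and> a < t k \<and> t k \<le> b}"

definition N_star_count :: "enat \<Rightarrow> (nat \<Rightarrow> real) \<Rightarrow> real \<Rightarrow> real \<Rightarrow> nat" where
  "N_star_count n t b a = card {k. enat k < n \<and> a \<le> t k \<and> t k \<le> b}"

definition S_class :: "real \<Rightarrow> real \<Rightarrow> real \<Rightarrow> real \<Rightarrow> real \<Rightarrow> (enat \<times> (nat \<Rightarrow> real)) set" where
  "S_class c d t0 mu lam = {(n, t). impulse_seq t0 n t \<and>
     (\<forall>s b. t0 \<le> s \<and> s \<le> b \<longrightarrow>
        - d * real (N_count n t b s) - (c - lam) * (b - s) \<le> mu)}"

definition S_star_class :: "real \<Rightarrow> real \<Rightarrow> real \<Rightarrow> real \<Rightarrow> real \<Rightarrow> (enat \<times> (nat \<Rightarrow> real)) set" where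
  "S_star_class c d t0 mu lam = {(n, t). impulse_seq t0 n t \<and>
     (\<forall>s b. t0 \<le> s \<and> s \<le> b \<longrightarrow>
        - d * real (N_star_count n t b s) - (c - lam) * (b - s) \<le> mu)}"

end

theory Submission
  imports Defs
begin

text \<open>Only finitely many impulse times lie below any bound.  Hence the half-open count
  N(b,s) equals the closed count N*(b,s') for some s' slightly to the right of s, and N*(b,s) equals N(b,s') for some s'
  slightly to the left of s (or s' = s = t0, as no impulse time equals t0).  Moving the
  left endpoint by at most e changes the drift term -(c - lambda)(b - s) by at most
  |c - lambda| e, so letting e tend to 0 transfers the defining inequality of either
  class to the other.\<close>

lemma finite_gap_right:
  fixes a b :: "'a::linorder"
  assumes "finite T" "a < b"
  shows "\<exists>x. a < x \<and> x \<le> b \<and> (\<forall>y\<in>T. a < y \<longrightarrow> x \<le> y)"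
proof -
  let ?M = "insert b {y\<in>T. a < y}"
  have "finite ?M" using assms(1) by simp
  then show ?thesis
    using assms(2) by (intro exI[of _ "Min ?M"]) (auto simp: Min_gr_iff)
qed

lemma finite_gap_left:
  fixes a b :: "'a::linorder"
  assumes "finite T" "a < b"
  shows "\<exists>x. a \<le> x \<and> x < b \<and> (\<forall>y\<in>T. y < b \<longrightarrow> y \<le> x)"
proof -
  let ?M = "insert a {y\<in>T. y < b}"
  have "finite ?M" using assms(1) by simp
  then show ?thesis
    using assms(2) by (intro exI[of _ "Max ?M"]) (auto simp: Max_less_iff)
qed

lemma impulse_seq_finite_le:
  assumes "impulse_seq t0 n t"
  shows "finite {k. enat k < n \<and> t k \<le> B}"
proof (cases n)
  case (enat m)
  then have "{k. enat k < n \<and> t k \<le> B} \<subseteq> {..<m}" by auto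
  then show ?thesis by (rule finite_subset) simp
next
  case infinity
  with assms have "filterlim t at_top sequentially" unfolding impulse_seq_def by auto
  then obtain k0 where "\<And>k. k \<ge> k0 \<Longrightarrow> B < t k"
    by (auto simp: filterlim_at_top_dense eventually_sequentially)
  then have "{k. enat k < n \<and> t k \<le> B} \<subseteq> {..<k0}" by (auto simp: not_le[symmetric])
  then show ?thesis by (rule finite_subset) simp
qed

lemma N_count_eq_N_star_count_right:
  assumes "impulse_seq t0 n t" "s < b" "e > 0"
  obtains s' where "s < s'" "s' \<le> b" "s' \<le> s + e" "N_count n t b s = N_star_count n t b s'"
proof -
  have "finite (t ` {k. enat k < n \<and> t k \<le> b})"
    using impulse_seq_finite_le[OF assms(1)] by simp
  moreover have "s < min b (s + e)" using assms(2,3) by simp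
  ultimately obtain s' where s': "s < s'" "s' \<le> min b (s + e)"
    and gap: "\<forall>y \<in> t ` {k. enat k < n \<and> t k \<le> b}. s < y \<longrightarrow> s' \<le> y"
    using finite_gap_right by blast
  have "s < t k \<and> t k \<le> b \<longleftrightarrow> s' \<le> t k \<and> t k \<le> b" if "enat k < n" for k
    using s'(1) gap that by fastforce
  then have "{k. enat k < n \<and> s < t k \<and> t k \<le> b} = {k. enat k < n \<and> s' \<le> t k \<and> t k \<le> b}"
    by blast
  then show thesis
    using that[of s'] s' by (simp add: N_count_def N_star_count_def)
qed

lemma N_star_count_eq_N_count_left:
  assumes "impulse_seq t0 n t" "t0 \<le> s" "e > 0"
  obtains s' where "t0 \<le> s'" "s - e \<le> s'" "s' \<le> s" "N_star_count n t b s = N_count n t b s'"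
proof (cases "s = t0")
  case True
  have "t0 < t k" if "enat k < n" for k
    using assms(1) that unfolding impulse_seq_def by blast
  then have "{k. enat k < n \<and> s \<le> t k \<and> t k \<le> b} = {k. enat k < n \<and> s < t k \<and> t k \<le> b}"
    using True by (auto simp: order_le_less)
  then show thesis
    using that[of s] True assms(3) by (simp add: N_count_def N_star_count_def)
next
  case False
  have "finite (t ` {k. enat k < n \<and> t k \<le> s})"
    using impulse_seq_finite_le[OF assms(1)] by simp
  moreover have "max t0 (s - e) < s" using False assms(2,3) by simp
  ultimately obtain s' where s': "max t0 (s - e) \<le> s'" "s' < s"
    and gap: "\<forall>y \<in> t ` {k. enat k < n \<and> t k \<le> s}. y < s \<longrightarrow> y \<le> s'"
    using finite_gap_left by blast
  have "s \<le> t k \<longleftrightarrow> s' < t k" if "enat k < n" for k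
    using s'(2) gap that by fastforce
  then have "{k. enat k < n \<and> s \<le> t k \<and> t k \<le> b} = {k. enat k < n \<and> s' < t k \<and> t k \<le> b}"
    by blast
  then show thesis
    using that[of s'] s' by (simp add: N_count_def N_star_count_def)
qed

lemma le_of_forall_pos_le_add_mult:
  fixes x y C :: real
  assumes "C \<ge> 0" "\<And>e. e > 0 \<Longrightarrow> x \<le> y + C * e"
  shows "x \<le> y"
proof (rule field_le_epsilon)
  fix e :: real
  assume "e > 0"
  with assms(1) have "e / (C + 1) > 0" by simp
  then have "x \<le> y + C * (e / (C + 1))" by (rule assms(2))
  moreover have "C * (e / (C + 1)) \<le> e"
    using assms(1) \<open>e > 0\<close> by (simp add: field_simps)
  ultimately show "x \<le> y + e" by linarith
qed

lemma mult_le_abs_mult_bound: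
  fixes a x e :: real
  assumes "\<bar>x\<bar> \<le> e"
  shows "a * x \<le> \<bar>a\<bar> * e"
proof -
  have "a * x \<le> \<bar>a\<bar> * \<bar>x\<bar>" by (simp add: abs_mult[symmetric])
  also have "\<dots> \<le> \<bar>a\<bar> * e" using assms by (simp add: mult_left_mono)
  finally show ?thesis .
qed

lemma N_bound_imp_N_star_bound:
  assumes "impulse_seq t0 n t"
    and "\<forall>s b. t0 \<le> s \<and> s \<le> b \<longrightarrow> - d * real (N_count n t b s) - (c - lam) * (b - s) \<le> mu"
  shows "\<forall>s b. t0 \<le> s \<and> s \<le> b \<longrightarrow> - d * real (N_star_count n t b s) - (c - lam) * (b - s) \<le> mu"
proof (intro allI impI)
  fix s b
  assume sb: "t0 \<le> s \<and> s \<le> b"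
  show "- d * real (N_star_count n t b s) - (c - lam) * (b - s) \<le> mu"
  proof (rule le_of_forall_pos_le_add_mult[of "\<bar>c - lam\<bar>"])
    fix e :: real
    assume "e > 0"
    with sb obtain s' where s': "t0 \<le> s'" "s - e \<le> s'" "s' \<le> s"
      and count: "N_star_count n t b s = N_count n t b s'"
      using N_star_count_eq_N_count_left[OF assms(1)] by blast
    have "- d * real (N_count n t b s') - (c - lam) * (b - s') \<le> mu"
      using assms(2) s' sb by auto
    moreover have "(c - lam) * (s - s') \<le> \<bar>c - lam\<bar> * e"
      using s' by (intro mult_le_abs_mult_bound) simp
    ultimately show "- d * real (N_star_count n t b s) - (c - lam) * (b - s) \<le> mu + \<bar>c - lam\<bar> * e"
      using count by (simp add: algebra_simps)
  qed simp
qed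

lemma N_star_bound_imp_N_bound:
  assumes "impulse_seq t0 n t" "mu \<ge> 0"
    and "\<forall>s b. t0 \<le> s \<and> s \<le> b \<longrightarrow> - d * real (N_star_count n t b s) - (c - lam) * (b - s) \<le> mu"
  shows "\<forall>s b. t0 \<le> s \<and> s \<le> b \<longrightarrow> - d * real (N_count n t b s) - (c - lam) * (b - s) \<le> mu"
proof (intro allI impI)
  fix s b
  assume sb: "t0 \<le> s \<and> s \<le> b"
  show "- d * real (N_count n t b s) - (c - lam) * (b - s) \<le> mu"
  proof (cases "s = b")
    case True
    then have "N_count n t b s = card ({} :: nat set)"
      unfolding N_count_def by (intro arg_cong[where f = card]) auto
    with True assms(2) show ?thesis by simp
  next
    case False
    show ?thesis
    proof (rule le_of_forall_pos_le_add_mult[of "\<bar>c - lam\<bar>"])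
      fix e :: real
      assume "e > 0"
      moreover from False sb have "s < b" by simp
      ultimately obtain s' where s': "s < s'" "s' \<le> b" "s' \<le> s + e"
        and count: "N_count n t b s = N_star_count n t b s'"
        using N_count_eq_N_star_count_right[OF assms(1)] by blast
      have "- d * real (N_star_count n t b s') - (c - lam) * (b - s') \<le> mu"
        using assms(3) s' sb by auto
      moreover have "(lam - c) * (s' - s) \<le> \<bar>c - lam\<bar> * e"
        using s' by (subst abs_minus_commute) (intro mult_le_abs_mult_bound, simp)
      ultimately show "- d * real (N_count n t b s) - (c - lam) * (b - s) \<le> mu + \<bar>c - lam\<bar> * e"
        using count by (simp add: algebra_simps)
    qed simp
  qed
qed

theorem lemma2:
  fixes c d t0 :: real
  assumes "d \<noteq> 0"
  shows "\<forall>mu lam. mu > 0 \<and> lam > 0 \<longrightarrow> S_class c d t0 mu lam = S_star_class c d t0 mu lam"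
proof (intro allI impI)
  fix mu lam :: real
  assume "mu > 0 \<and> lam > 0"
  then have "mu \<ge> 0" by simp
  then show "S_class c d t0 mu lam = S_star_class c d t0 mu lam"
    unfolding S_class_def S_star_class_def
    using N_bound_imp_N_star_bound N_star_bound_imp_N_bound by blast
qed

end
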